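(* For all $0\le p\le t\le 1$, $\pi(p,t)=\sup\{\mathbf P(S_\gamma\ge t)\mid \gamma \text{ a finite stake sequence}\}$.
   Context: Let $\beta_1,\beta_2,\ldots$ be independent Bernoulli random variables with success probability $p$. A stake sequence is a sequence $\gamma=(c_1,c_2,\ldots)$ of non-negative reals with $c_1\ge c_2\ge\cdots$ and $\sum_i c_i=1$; it is finite if $c_i=0$ for all but finitely many $i$. Write $S_\gamma=\sum_i c_i\beta_i$. For $0\le p\le t\le 1$ define $\pi(p,t)=\sup\{\mathbf P(S_\gamma\ge t)\mid \gamma \text{ a stake sequence}\}$. *)

theory Defs
  imports "HOL-Probability.Probability"
begin

definition stake_seq :: "(nat \<Rightarrow> real) \<Rightarrow> bool" where
  "stake_seq c \<longleftrightarrow> (\<forall>i. 0 \<le> c i) \<and> decseq c \<and> c sums 1"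

definition finite_stake_seq :: "(nat \<Rightarrow> real) \<Rightarrow> bool" where
  "finite_stake_seq c \<longleftrightarrow> stake_seq c \<and> finite {i. c i \<noteq> 0}"

definition bern_space :: "real \<Rightarrow> (nat \<Rightarrow> bool) measure" where
  "bern_space p = PiM UNIV (\<lambda>i::nat. measure_pmf (bernoulli_pmf p))"

definition stake_sum :: "(nat \<Rightarrow> real) \<Rightarrow> (nat \<Rightarrow> bool) \<Rightarrow> real" where
  "stake_sum c \<omega> = (\<Sum>i. c i * (if \<omega> i then 1 else 0))"

definition win_prob :: "real \<Rightarrow> real \<Rightarrow> (nat \<Rightarrow> real) \<Rightarrow> real" where
  "win_prob p t c = measure (bern_space p) {\<omega> \<in> space (bern_space p). stake_sum c \<omega> \<ge> t}"

definition pi_fun :: "real \<Rightarrow> real \<Rightarrow> real" where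
  "pi_fun p t = Sup {win_prob p t c | c. stake_seq c}"

end

theory Submission
  imports Defs
begin

text \<open>Write S for the stake sum and split P(S \<ge> t) = P(S > t) + P(S = t). The event S > t is
  the increasing union of the events that a partial sum c_0 beta_0 + ... + c_n beta_n exceeds t, and
  on each of them the finite stake sequence (c_0, ..., c_n) / (c_0 + ... + c_n) reaches t, because
  the renormalisation can only increase the partial sum. The atom P(S = t) vanishes when infinitely
  many stakes are positive and 0 < p < 1: call J lacunary if every stake in J exceeds the sum of the
  later stakes in J. Then S together with the coordinates outside J determines the coordinates in J,
  so by independence P(S = t) \<le> max(p, 1 - p)^|J|, and lacunary sets of every size exist since
  c_i \<rightarrow> 0. In the degenerate cases p \<in> {0, 1} or t \<le> 0 the single stake (1, 0, 0, ...) is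
  already optimal.\<close>

abbreviation bern :: "real \<Rightarrow> bool measure" where
  "bern p \<equiv> measure_pmf (bernoulli_pmf p)"

lemma space_bern_space [simp]: "space (bern_space p) = UNIV"
  by (simp add: bern_space_def space_PiM)

lemma prob_space_bern_space: "prob_space (bern_space p)"
  unfolding bern_space_def by (rule prob_space_PiM) (simp add: prob_space_measure_pmf)

lemma measurable_component_bern:
  assumes "i \<in> I"
  shows "(\<lambda>\<omega>. \<omega> i) \<in> measurable (PiM I (\<lambda>_. bern p)) (count_space UNIV)"
proof -
  have "(\<lambda>\<omega>. \<omega> i) \<in> measurable (PiM I (\<lambda>_. bern p)) (bern p)"
    using assms by (rule measurable_component_singleton)
  then show ?thesis
    by (subst measurable_cong_sets[OF refl, of _ "bern p"]) auto
qed

lemma measurable_component_bern_space: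
  "(\<lambda>\<omega>. \<omega> i) \<in> measurable (bern_space p) (count_space UNIV)"
  unfolding bern_space_def by (rule measurable_component_bern) simp

lemma borel_measurable_stake_sum:
  assumes "\<And>i. (\<lambda>x. g x i) \<in> measurable N (count_space UNIV)"
  shows "(\<lambda>x. stake_sum c (g x)) \<in> borel_measurable N"
  unfolding stake_sum_def
proof (rule borel_measurable_suminf)
  fix i
  have "(\<lambda>b. c i * (if b then 1 else 0 :: real)) \<in> borel_measurable (count_space UNIV)"
    by simp
  from measurable_compose[OF assms this]
  show "(\<lambda>x. c i * (if g x i then 1 else 0)) \<in> borel_measurable N" .
qed

lemma sets_bern_space_stake_sum:
  "{\<omega>. t \<le> stake_sum c \<omega>} \<in> sets (bern_space p)"
  "{\<omega>. t < stake_sum c \<omega>} \<in> sets (bern_space p)"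
  "{\<omega>. stake_sum c \<omega> = t} \<in> sets (bern_space p)"
proof -
  have S: "stake_sum c \<in> borel_measurable (bern_space p)"
    using borel_measurable_stake_sum[of "\<lambda>\<omega>. \<omega>"] measurable_component_bern_space by simp
  show "{\<omega>. t \<le> stake_sum c \<omega>} \<in> sets (bern_space p)"
    using measurable_sets[OF S, of "{t..}"] by (simp add: vimage_def)
  show "{\<omega>. t < stake_sum c \<omega>} \<in> sets (bern_space p)"
    using measurable_sets[OF S, of "{t<..}"] by (simp add: vimage_def)
  show "{\<omega>. stake_sum c \<omega> = t} \<in> sets (bern_space p)"
    using borel_measurable_vimage[OF S, of t] by (simp add: vimage_def)
qed

lemma sets_bern_space_cylinder:
  assumes "finite J"
  shows "{\<omega>. \<forall>j\<in>J. \<omega> j = \<sigma> j} \<in> sets (bern_space p)"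
proof -
  have "{\<omega> \<in> space (bern_space p). \<omega> j = \<sigma> j} \<in> sets (bern_space p)" for j
    using measurable_sets[OF measurable_component_bern_space, of "{\<sigma> j}"] by (simp add: vimage_def)
  from sets.sets_Collect_finite_All[OF this assms]
  show ?thesis
    by simp
qed

lemma measure_bern_space_cylinder:
  assumes "finite J"
  shows "measure (bern_space p) {\<omega>. \<forall>j\<in>J. \<omega> j = \<sigma> j} = (\<Prod>j\<in>J. pmf (bernoulli_pmf p) (\<sigma> j))"
proof -
  interpret product_prob_space "\<lambda>_. bern p" UNIV
    by unfold_locales (simp add: prob_space_measure_pmf)
  have "emeasure (bern_space p) {\<omega>. \<forall>j\<in>J. \<omega> j \<in> {\<sigma> j}}
      = (\<Prod>j\<in>J. emeasure (bern p) {\<sigma> j})"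
    using emeasure_PiM_Collect[of J "\<lambda>j. {\<sigma> j}"] assms
    by (simp add: bern_space_def space_PiM)
  then show ?thesis
    by (simp add: measure_def emeasure_pmf_single prod_ennreal prod_nonneg)
qed

lemma indep_var_restrict_bern_space:
  "prob_space.indep_var (bern_space p) (PiM J (\<lambda>_. bern p)) (\<lambda>\<omega>. restrict \<omega> J)
     (PiM (-J) (\<lambda>_. bern p)) (\<lambda>\<omega>. restrict \<omega> (-J))"
proof -
  interpret prob_space "bern_space p" by (rule prob_space_bern_space)
  have "indep_vars (\<lambda>_. bern p) (\<lambda>i \<omega>. \<omega> i) UNIV"
  proof (subst indep_vars_iff_distr_eq_PiM)
    show "random_variable (bern p) (\<lambda>\<omega>. \<omega> i)" for i
      unfolding bern_space_def by (rule measurable_component_singleton) simp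
    have "(\<lambda>i::nat. distr (bern_space p) (bern p) (\<lambda>\<omega>. \<omega> i)) = (\<lambda>_. bern p)"
      unfolding bern_space_def
      by (intro ext distr_PiM_component) (auto simp: prob_space_measure_pmf)
    then show "distr (bern_space p) (PiM UNIV (\<lambda>_. bern p)) (\<lambda>\<omega>. \<lambda>i\<in>UNIV. \<omega> i)
        = PiM UNIV (\<lambda>i. distr (bern_space p) (bern p) (\<lambda>\<omega>. \<omega> i))"
      by (simp add: restrict_UNIV bern_space_def)
  qed simp
  from indep_var_restrict[OF this, of J "-J"] show ?thesis
    by simp
qed

lemma measure_bern_space_cylinder_Int:
  assumes J: "finite J" and Y: "Y \<in> sets (PiM (-J) (\<lambda>_. bern p))"
  shows "measure (bern_space p) ({\<omega>. \<forall>j\<in>J. \<omega> j = \<sigma> j} \<inter> {\<omega>. restrict \<omega> (-J) \<in> Y})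
       = (\<Prod>j\<in>J. pmf (bernoulli_pmf p) (\<sigma> j)) * measure (bern_space p) {\<omega>. restrict \<omega> (-J) \<in> Y}"
proof -
  interpret prob_space "bern_space p" by (rule prob_space_bern_space)
  let ?X = "PiE J (\<lambda>j. {\<sigma> j})"
  have X: "?X \<in> sets (PiM J (\<lambda>_. bern p))"
    by (rule sets_PiM_I_finite[OF J]) simp
  have "prob ((\<lambda>\<omega>. (restrict \<omega> J, restrict \<omega> (-J))) -` (?X \<times> Y) \<inter> space (bern_space p))
      = prob ((\<lambda>\<omega>. restrict \<omega> J) -` ?X \<inter> space (bern_space p))
        * prob ((\<lambda>\<omega>. restrict \<omega> (-J)) -` Y \<inter> space (bern_space p))"
    using indep_varD[OF indep_var_restrict_bern_space X Y] .
  also have "(\<lambda>\<omega>. (restrict \<omega> J, restrict \<omega> (-J))) -` (?X \<times> Y) \<inter> space (bern_space p)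
      = {\<omega>. \<forall>j\<in>J. \<omega> j = \<sigma> j} \<inter> {\<omega>. restrict \<omega> (-J) \<in> Y}"
    by (simp add: set_eq_iff Pi_iff)
  also have "(\<lambda>\<omega>. restrict \<omega> J) -` ?X \<inter> space (bern_space p) = {\<omega>. \<forall>j\<in>J. \<omega> j = \<sigma> j}"
    by (simp add: set_eq_iff Pi_iff)
  also have "(\<lambda>\<omega>. restrict \<omega> (-J)) -` Y \<inter> space (bern_space p) = {\<omega>. restrict \<omega> (-J) \<in> Y}"
    by auto
  finally show ?thesis
    by (simp only: measure_bern_space_cylinder[OF J])
qed

lemma stake_seq_nonneg: "stake_seq c \<Longrightarrow> 0 \<le> c i"
  by (simp add: stake_seq_def)

lemma summable_stake_sum:
  assumes "stake_seq c"
  shows "summable (\<lambda>i. c i * (if \<omega> i then 1 else 0))"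
proof -
  have "summable c"
    using assms by (auto simp: stake_seq_def sums_iff)
  then show ?thesis
    by (rule summable_comparison_test'[where N = 0]) (simp add: stake_seq_nonneg[OF assms])
qed

lemma stake_seq_zero_after:
  assumes "stake_seq c" "c i \<le> 0" "i \<le> j"
  shows "c j = 0"
proof -
  have "c j \<le> c i" "0 \<le> c j"
    using assms(1,3) by (auto simp: stake_seq_def decseq_def)
  then show ?thesis using assms(2) by linarith
qed

lemma stake_seq_first_pos:
  assumes "stake_seq c"
  shows "0 < c 0"
proof (rule ccontr)
  assume "\<not> 0 < c 0"
  then have "c i = 0" for i
    using stake_seq_zero_after[OF assms, of 0 i] by simp
  then have "c = (\<lambda>_. 0)" by auto
  then have "c sums 0" by simp
  moreover have "c sums 1" using assms by (simp add: stake_seq_def)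
  ultimately show False using sums_unique2 by fastforce
qed

lemma stake_seq_pos_of_infinite_support:
  assumes "stake_seq c" "infinite {i. c i \<noteq> 0}"
  shows "0 < c i"
proof (rule ccontr)
  assume "\<not> 0 < c i"
  then have "c j = 0" if "i \<le> j" for j
    using stake_seq_zero_after[OF assms(1) _ that] by simp
  then have "x < i" if "c x \<noteq> 0" for x
    using that not_less by blast
  then have "{i. c i \<noteq> 0} \<subseteq> {..<i}" by auto
  then show False
    using assms(2) finite_subset by blast
qed

definition lacunary :: "(nat \<Rightarrow> real) \<Rightarrow> nat set \<Rightarrow> bool" where
  "lacunary c J \<longleftrightarrow> finite J \<and> (\<forall>j\<in>J. (\<Sum>i\<in>{i\<in>J. j < i}. c i) < c j)"

lemma lacunary_insert:
  assumes J: "lacunary c J" and above: "\<forall>j\<in>J. j < m" and pos: "0 < c m"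
    and small: "\<forall>j\<in>J. c m < c j - (\<Sum>i\<in>{i\<in>J. j < i}. c i)"
  shows "lacunary c (insert m J)"
  unfolding lacunary_def
proof (intro conjI ballI)
  have fin: "finite J" and m: "m \<notin> J"
    using J above by (auto simp: lacunary_def)
  then show "finite (insert m J)" by simp
  fix j assume "j \<in> insert m J"
  then consider "j = m" | "j \<in> J" by blast
  then show "(\<Sum>i\<in>{i \<in> insert m J. j < i}. c i) < c j"
  proof cases
    case 1
    then have "{i \<in> insert m J. j < i} = {}"
      using above by auto
    then show ?thesis using pos 1 by (simp only: sum.empty)
  next
    case 2
    then have "{i \<in> insert m J. j < i} = insert m {i \<in> J. j < i}"
      using above by auto
    then have "(\<Sum>i\<in>{i \<in> insert m J. j < i}. c i) = c m + (\<Sum>i\<in>{i \<in> J. j < i}. c i)"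
      using fin m by (simp add: sum.insert)
    also have "\<dots> < c j"
      using small 2 by auto
    finally show ?thesis .
  qed
qed

lemma lacunary_exists:
  assumes pos: "\<And>i. 0 < c i" and lim: "c \<longlonglongrightarrow> 0"
  shows "\<exists>J. lacunary c J \<and> card J = K"
proof (induction K)
  case 0
  show ?case by (rule exI[of _ "{}"]) (simp add: lacunary_def)
next
  case (Suc K)
  then obtain J where J: "lacunary c J" "card J = K" by blast
  have "\<forall>j\<in>J. \<forall>\<^sub>F m in sequentially. j < m \<and> c m < c j - (\<Sum>i\<in>{i\<in>J. j < i}. c i)"
  proof
    fix j assume "j \<in> J"
    then have "0 < c j - (\<Sum>i\<in>{i\<in>J. j < i}. c i)"
      using J by (simp add: lacunary_def)
    from order_tendstoD(2)[OF lim this]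
    show "\<forall>\<^sub>F m in sequentially. j < m \<and> c m < c j - (\<Sum>i\<in>{i\<in>J. j < i}. c i)"
      by (rule eventually_conj[OF eventually_gt_at_top])
  qed
  then have "\<forall>\<^sub>F m in sequentially. \<forall>j\<in>J. j < m \<and> c m < c j - (\<Sum>i\<in>{i\<in>J. j < i}. c i)"
    using J by (intro eventually_ball_finite) (auto simp: lacunary_def)
  then obtain m where "\<forall>j\<in>J. j < m \<and> c m < c j - (\<Sum>i\<in>{i\<in>J. j < i}. c i)"
    by (auto simp: eventually_sequentially)
  then have "lacunary c (insert m J)" and "m \<notin> J"
    using lacunary_insert[OF J(1) _ pos] by auto
  then show ?case
    using J by (intro exI[of _ "insert m J"]) (simp add: lacunary_def)
qed

text \<open>At the first index of J where x and y differ, the stake exceeds the sum of all later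
  stakes of J, so the two stake sums cannot agree.\<close>
lemma lacunary_stake_sum_inj:
  assumes c: "stake_seq c" and J: "lacunary c J"
    and outside: "\<And>i. i \<notin> J \<Longrightarrow> x i = y i" and eq: "stake_sum c x = stake_sum c y"
  shows "\<forall>j\<in>J. x j = y j"
proof (rule ccontr)
  define D where "D = {i\<in>J. x i \<noteq> y i}"
  define f where "f i = c i * (if x i then 1 else 0) - c i * (if y i then 1 else 0)" for i
  have fin: "finite J" using J by (simp add: lacunary_def)
  assume "\<not> (\<forall>j\<in>J. x j = y j)"
  then have "D \<noteq> {}" by (auto simp: D_def)
  define j where "j = Min D"
  have finD: "finite D" using fin by (simp add: D_def)
  have "j \<in> D"
    unfolding j_def using finD \<open>D \<noteq> {}\<close> by (rule Min_in)
  then have jJ: "j \<in> J" and fj: "\<bar>f j\<bar> = c j"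
    using stake_seq_nonneg[OF c, of j] by (auto simp: D_def f_def)
  have below: "f i = 0" if "i \<in> J" "i < j" for i
    using Min_le[OF finD, of i] that by (force simp: D_def f_def j_def)
  have "0 = stake_sum c x - stake_sum c y" using eq by simp
  also have "\<dots> = suminf f"
    unfolding stake_sum_def f_def
    by (rule suminf_diff[OF summable_stake_sum[OF c] summable_stake_sum[OF c]])
  also have "\<dots> = (\<Sum>i\<in>J. f i)"
    by (rule suminf_finite[OF fin]) (simp add: f_def outside)
  also have "\<dots> = (\<Sum>i\<in>insert j {i\<in>J. j < i}. f i)"
  proof (rule sum.mono_neutral_right[OF fin])
    show "insert j {i\<in>J. j < i} \<subseteq> J" using jJ by auto
    show "\<forall>i\<in>J - insert j {i\<in>J. j < i}. f i = 0"
    proof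
      fix i assume "i \<in> J - insert j {i\<in>J. j < i}"
      then have "i \<in> J" "i < j" by auto
      then show "f i = 0" by (rule below)
    qed
  qed
  also have "\<dots> = f j + (\<Sum>i\<in>{i\<in>J. j < i}. f i)"
    using fin by (simp add: sum.insert)
  finally have "\<bar>f j\<bar> = \<bar>\<Sum>i\<in>{i\<in>J. j < i}. f i\<bar>" by linarith
  also have "\<dots> \<le> (\<Sum>i\<in>{i\<in>J. j < i}. c i)"
    using stake_seq_nonneg[OF c] by (intro order_trans[OF sum_abs sum_mono]) (simp add: f_def)
  also have "\<dots> < c j" using J jJ by (simp add: lacunary_def)
  finally show False using fj by simp
qed

lemma pmf_bernoulli_le_max:
  assumes "0 \<le> p" "p \<le> 1"
  shows "pmf (bernoulli_pmf p) b \<le> max p (1 - p)"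
  using assms by (cases b) auto

lemma lacunary_override_inj:
  assumes c: "stake_seq c" and J: "lacunary c J"
    and \<sigma>: "\<sigma> \<in> PiE J (\<lambda>_. UNIV)" "\<sigma>' \<in> PiE J (\<lambda>_. UNIV)"
    and eq: "stake_sum c (override_on \<omega> \<sigma> J) = stake_sum c (override_on \<omega> \<sigma>' J)"
  shows "\<sigma> = \<sigma>'"
proof -
  have "\<forall>j\<in>J. override_on \<omega> \<sigma> J j = override_on \<omega> \<sigma>' J j"
    using eq by (intro lacunary_stake_sum_inj[OF c J]) (auto simp: override_on_def)
  then show ?thesis
    using \<sigma> by (auto simp: override_on_def PiE_iff extensional_def fun_eq_iff)
qed

text \<open>The second event only depends on the coordinates outside J.\<close>
lemma measure_cylinder_Int_override:
  assumes J: "finite J"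
  shows "measure (bern_space p) ({\<omega>. \<forall>j\<in>J. \<omega> j = \<sigma> j} \<inter> {\<omega>. stake_sum c (override_on \<omega> \<sigma> J) = t})
       = (\<Prod>j\<in>J. pmf (bernoulli_pmf p) (\<sigma> j))
         * measure (bern_space p) {\<omega>. stake_sum c (override_on \<omega> \<sigma> J) = t}"
proof -
  define Y where "Y = (\<lambda>x. stake_sum c (override_on x \<sigma> J)) -` {t} \<inter> space (PiM (-J) (\<lambda>_. bern p))"
  have "(\<lambda>x. override_on x \<sigma> J i) \<in> measurable (PiM (-J) (\<lambda>_. bern p)) (count_space UNIV)" for i
    by (cases "i \<in> J") (auto simp: override_on_def intro: measurable_component_bern)
  then have "Y \<in> sets (PiM (-J) (\<lambda>_. bern p))"
    unfolding Y_def by (rule borel_measurable_vimage[OF borel_measurable_stake_sum])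
  moreover have "{\<omega>. stake_sum c (override_on \<omega> \<sigma> J) = t} = {\<omega>. restrict \<omega> (-J) \<in> Y}"
  proof -
    have "override_on (restrict \<omega> (-J)) \<sigma> J = override_on \<omega> \<sigma> J" for \<omega>
      by (auto simp: override_on_def)
    moreover have "restrict \<omega> (-J) \<in> space (PiM (-J) (\<lambda>_. bern p))" for \<omega>
      by (simp add: space_PiM)
    ultimately show ?thesis
      by (auto simp: Y_def)
  qed
  ultimately show ?thesis
    using measure_bern_space_cylinder_Int[OF J] by simp
qed

lemma measure_stake_sum_eq_le:
  assumes c: "stake_seq c" and J: "lacunary c J" and p: "0 \<le> p" "p \<le> 1"
  shows "measure (bern_space p) {\<omega>. stake_sum c \<omega> = t} \<le> max p (1 - p) ^ card J"
proof -
  interpret prob_space "bern_space p" by (rule prob_space_bern_space)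
  let ?q = "max p (1 - p)"
  have fin: "finite J" using J by (simp add: lacunary_def)
  define patterns where "patterns = PiE J (\<lambda>_. UNIV :: bool set)"
  define C where "C \<sigma> = {\<omega>. \<forall>j\<in>J. \<omega> j = \<sigma> j}" for \<sigma> :: "nat \<Rightarrow> bool"
  define B where "B \<sigma> = {\<omega>. stake_sum c (override_on \<omega> \<sigma> J) = t}" for \<sigma>
  have fin_patterns: "finite patterns" using fin by (simp add: patterns_def finite_PiE)
  have C_sets: "C \<sigma> \<in> sets (bern_space p)" for \<sigma>
    unfolding C_def by (rule sets_bern_space_cylinder[OF fin])
  have "(\<lambda>\<omega>. override_on \<omega> \<sigma> J i) \<in> measurable (bern_space p) (count_space UNIV)" for \<sigma> i
    by (cases "i \<in> J") (auto simp: override_on_def measurable_component_bern_space)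
  from borel_measurable_vimage[OF borel_measurable_stake_sum[OF this]]
  have B_sets: "B \<sigma> \<in> sets (bern_space p)" for \<sigma>
    by (simp add: B_def vimage_def)
  have CB: "prob (C \<sigma> \<inter> B \<sigma>) \<le> ?q ^ card J * prob (B \<sigma>)" for \<sigma>
  proof -
    have "(\<Prod>j\<in>J. pmf (bernoulli_pmf p) (\<sigma> j)) \<le> (\<Prod>j\<in>J. ?q)"
      using pmf_bernoulli_le_max[OF p] by (intro prod_mono) simp
    then show ?thesis
      unfolding C_def B_def measure_cylinder_Int_override[OF fin]
      by (intro mult_right_mono) simp_all
  qed
  have disjoint: "disjoint_family_on B patterns"
    unfolding disjoint_family_on_def B_def patterns_def
    using lacunary_override_inj[OF c J] by auto
  have cover: "{\<omega>. stake_sum c \<omega> = t} \<subseteq> (\<Union>\<sigma>\<in>patterns. C \<sigma> \<inter> B \<sigma>)"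
  proof
    fix \<omega> assume "\<omega> \<in> {\<omega>. stake_sum c \<omega> = t}"
    moreover have "override_on \<omega> (restrict \<omega> J) J = \<omega>" by (auto simp: override_on_def)
    ultimately have "\<omega> \<in> C (restrict \<omega> J) \<inter> B (restrict \<omega> J)" by (simp add: C_def B_def)
    moreover have "restrict \<omega> J \<in> patterns" by (simp add: patterns_def)
    ultimately show "\<omega> \<in> (\<Union>\<sigma>\<in>patterns. C \<sigma> \<inter> B \<sigma>)" by blast
  qed
  have "prob {\<omega>. stake_sum c \<omega> = t} \<le> prob (\<Union>\<sigma>\<in>patterns. C \<sigma> \<inter> B \<sigma>)"
    using fin_patterns C_sets B_sets by (intro finite_measure_mono[OF cover]) auto
  also have "\<dots> \<le> (\<Sum>\<sigma>\<in>patterns. prob (C \<sigma> \<inter> B \<sigma>))"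
    using fin_patterns C_sets B_sets by (intro finite_measure_subadditive_finite) auto
  also have "\<dots> \<le> (\<Sum>\<sigma>\<in>patterns. ?q ^ card J * prob (B \<sigma>))"
    by (intro sum_mono CB)
  also have "\<dots> = ?q ^ card J * prob (\<Union>\<sigma>\<in>patterns. B \<sigma>)"
    using fin_patterns disjoint B_sets
    by (simp add: finite_measure_finite_Union sum_distrib_left subset_eq)
  also have "\<dots> \<le> ?q ^ card J"
    by (simp add: mult_left_le)
  finally show ?thesis .
qed

lemma measure_stake_sum_eq_zero:
  assumes c: "stake_seq c" and pos: "\<And>i. 0 < c i" and p: "0 < p" "p < 1"
  shows "measure (bern_space p) {\<omega>. stake_sum c \<omega> = t} = 0"
proof -
  let ?q = "max p (1 - p)"
  have "c \<longlonglongrightarrow> 0"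
    using c by (intro summable_LIMSEQ_zero) (auto simp: stake_seq_def sums_iff)
  have bound: "measure (bern_space p) {\<omega>. stake_sum c \<omega> = t} \<le> ?q ^ K" for K
  proof -
    obtain J where "lacunary c J" "card J = K"
      using lacunary_exists[OF pos \<open>c \<longlonglongrightarrow> 0\<close>] by blast
    then show ?thesis
      using measure_stake_sum_eq_le[OF c, of J p t] p by simp
  qed
  have "(\<lambda>K. ?q ^ K) \<longlonglongrightarrow> 0"
    using p by (intro LIMSEQ_power_zero) auto
  then have "measure (bern_space p) {\<omega>. stake_sum c \<omega> = t} \<le> 0"
    using bound by (intro LIMSEQ_le_const) auto
  then show ?thesis
    by (simp add: measure_le_0_iff)
qed

definition stake_trunc :: "(nat \<Rightarrow> real) \<Rightarrow> nat \<Rightarrow> nat \<Rightarrow> real" where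
  "stake_trunc c n i = (if i < n then c i / (\<Sum>k<n. c k) else 0)"

lemma stake_seq_partial_sum_pos:
  assumes "stake_seq c" "0 < n"
  shows "0 < (\<Sum>k<n. c k)"
proof -
  have "c 0 \<le> (\<Sum>k<n. c k)"
    using assms by (intro member_le_sum) (auto simp: stake_seq_nonneg)
  then show ?thesis
    using stake_seq_first_pos[OF assms(1)] by simp
qed

lemma finite_stake_seq_trunc:
  assumes c: "stake_seq c" and n: "0 < n"
  shows "finite_stake_seq (stake_trunc c n)"
  unfolding finite_stake_seq_def stake_seq_def
proof (intro conjI allI)
  have s: "0 < (\<Sum>k<n. c k)" by (rule stake_seq_partial_sum_pos[OF c n])
  show "0 \<le> stake_trunc c n i" for i
    using s stake_seq_nonneg[OF c] by (simp add: stake_trunc_def)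
  show "decseq (stake_trunc c n)"
  proof (rule decseq_SucI)
    fix i
    have "c (Suc i) \<le> c i" using c by (simp add: stake_seq_def decseq_Suc_iff)
    then show "stake_trunc c n (Suc i) \<le> stake_trunc c n i"
      using s stake_seq_nonneg[OF c, of i] by (auto simp: stake_trunc_def divide_right_mono)
  qed
  have "stake_trunc c n sums (\<Sum>i<n. stake_trunc c n i)"
    by (rule sums_finite) (auto simp: stake_trunc_def)
  moreover have "(\<Sum>i<n. stake_trunc c n i) = 1"
    using s by (simp add: stake_trunc_def sum_divide_distrib[symmetric])
  ultimately show "stake_trunc c n sums 1" by simp
  show "finite {i. stake_trunc c n i \<noteq> 0}"
    by (rule finite_subset[of _ "{..<n}"]) (auto simp: stake_trunc_def)
qed

lemma partial_stake_sum_le_trunc: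
  assumes c: "stake_seq c" and n: "0 < n"
  shows "(\<Sum>i<n. c i * (if \<omega> i then 1 else 0)) \<le> stake_sum (stake_trunc c n) \<omega>"
proof -
  define s where "s = (\<Sum>k<n. c k)"
  have s_pos: "0 < s" unfolding s_def by (rule stake_seq_partial_sum_pos[OF c n])
  have "s \<le> suminf c"
    unfolding s_def using c by (intro sum_le_suminf) (auto simp: stake_seq_def sums_iff)
  then have s_le: "s \<le> 1" using c by (simp add: stake_seq_def sums_iff)
  have partial_nonneg: "0 \<le> (\<Sum>i<n. c i * (if \<omega> i then 1 else 0))"
    by (intro sum_nonneg) (simp add: stake_seq_nonneg[OF c])
  have "stake_sum (stake_trunc c n) \<omega> = (\<Sum>i<n. stake_trunc c n i * (if \<omega> i then 1 else 0))"
    unfolding stake_sum_def by (rule suminf_finite) (auto simp: stake_trunc_def)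
  also have "\<dots> = (\<Sum>i<n. c i * (if \<omega> i then 1 else 0)) / s"
    by (simp add: stake_trunc_def s_def sum_divide_distrib)
  finally show ?thesis
    using s_pos s_le partial_nonneg by (simp add: le_divide_eq mult_left_le)
qed

lemma stake_sum_gt_iff_partial:
  assumes c: "stake_seq c"
  shows "t < stake_sum c \<omega> \<longleftrightarrow> (\<exists>n. t < (\<Sum>i<Suc n. c i * (if \<omega> i then 1 else 0)))"
proof
  have "(\<lambda>n. \<Sum>i<n. c i * (if \<omega> i then 1 else 0)) \<longlonglongrightarrow> stake_sum c \<omega>"
    unfolding stake_sum_def by (rule summable_LIMSEQ[OF summable_stake_sum[OF c]])
  moreover assume "t < stake_sum c \<omega>"
  ultimately have "\<forall>\<^sub>F n in sequentially. t < (\<Sum>i<n. c i * (if \<omega> i then 1 else 0))"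
    by (rule order_tendstoD(1))
  then obtain N where "\<forall>n\<ge>N. t < (\<Sum>i<n. c i * (if \<omega> i then 1 else 0))"
    by (auto simp: eventually_sequentially)
  then have "t < (\<Sum>i<Suc N. c i * (if \<omega> i then 1 else 0))"
    by (simp del: sum.lessThan_Suc)
  then show "\<exists>n. t < (\<Sum>i<Suc n. c i * (if \<omega> i then 1 else 0))" ..
next
  assume "\<exists>n. t < (\<Sum>i<Suc n. c i * (if \<omega> i then 1 else 0))"
  then obtain n where "t < (\<Sum>i<Suc n. c i * (if \<omega> i then 1 else 0))" ..
  also have "\<dots> \<le> stake_sum c \<omega>"
    unfolding stake_sum_def
    by (rule sum_le_suminf[OF summable_stake_sum[OF c]]) (auto simp: stake_seq_nonneg[OF c])
  finally show "t < stake_sum c \<omega>" .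
qed

lemma measure_stake_sum_gt_le:
  assumes c: "stake_seq c" and bound: "\<And>c'. finite_stake_seq c' \<Longrightarrow> win_prob p t c' \<le> B"
  shows "measure (bern_space p) {\<omega>. t < stake_sum c \<omega>} \<le> B"
proof -
  interpret prob_space "bern_space p" by (rule prob_space_bern_space)
  define partial where "partial n \<omega> = (\<Sum>i<n. c i * (if \<omega> i then 1 else 0 :: real))" for n \<omega>
  define A where "A n = {\<omega>. t < partial (Suc n) \<omega>}" for n
  have "partial n \<omega> = stake_sum (\<lambda>i. if i < n then c i else 0) \<omega>" for n \<omega>
    unfolding stake_sum_def partial_def by (subst suminf_finite[of "{..<n}"]) auto
  then have A_sets: "A n \<in> sets (bern_space p)" for n
    unfolding A_def by (simp only: sets_bern_space_stake_sum)
  have "incseq A"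
    unfolding incseq_Suc_iff A_def partial_def
    using stake_seq_nonneg[OF c] by (auto intro: less_le_trans)
  moreover have union: "(\<Union>n. A n) = {\<omega>. t < stake_sum c \<omega>}"
    by (auto simp: A_def partial_def stake_sum_gt_iff_partial[OF c])
  ultimately have lim: "(\<lambda>n. prob (A n)) \<longlonglongrightarrow> prob {\<omega>. t < stake_sum c \<omega>}"
    using A_sets by (simp add: finite_Lim_measure_incseq image_subset_iff flip: union)
  have "prob (A n) \<le> B" for n
  proof -
    have "A n \<subseteq> {\<omega>. t \<le> stake_sum (stake_trunc c (Suc n)) \<omega>}"
    proof
      fix \<omega> assume "\<omega> \<in> A n"
      then have "t < partial (Suc n) \<omega>" by (simp add: A_def)
      also have "partial (Suc n) \<omega> \<le> stake_sum (stake_trunc c (Suc n)) \<omega>"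
        unfolding partial_def by (rule partial_stake_sum_le_trunc[OF c]) simp
      finally show "\<omega> \<in> {\<omega>. t \<le> stake_sum (stake_trunc c (Suc n)) \<omega>}" by simp
    qed
    then have "prob (A n) \<le> win_prob p t (stake_trunc c (Suc n))"
      unfolding win_prob_def by (simp add: finite_measure_mono sets_bern_space_stake_sum)
    also have "\<dots> \<le> B"
      by (rule bound[OF finite_stake_seq_trunc[OF c]]) simp
    finally show ?thesis .
  qed
  then show ?thesis
    by (intro LIMSEQ_le_const2[OF lim]) simp
qed

lemma win_prob_nonneg: "0 \<le> win_prob p t c"
  by (simp add: win_prob_def)

lemma win_prob_le_1: "win_prob p t c \<le> 1"
proof -
  interpret prob_space "bern_space p" by (rule prob_space_bern_space)
  show ?thesis by (simp add: win_prob_def)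
qed

definition unit_stake :: "nat \<Rightarrow> real" where
  "unit_stake i = (if i = 0 then 1 else 0)"

lemma finite_stake_seq_unit_stake: "finite_stake_seq unit_stake"
  unfolding finite_stake_seq_def stake_seq_def
proof (intro conjI allI)
  show "decseq unit_stake" by (rule decseq_SucI) (simp add: unit_stake_def)
  show "unit_stake sums 1"
    using sums_single[of 0 "\<lambda>_. 1 :: real"] by (simp add: unit_stake_def [abs_def])
  show "finite {i. unit_stake i \<noteq> 0}"
    by (rule finite_subset[of _ "{0}"]) (auto simp: unit_stake_def)
qed (simp add: unit_stake_def)

lemma stake_sum_unit_stake: "stake_sum unit_stake \<omega> = (if \<omega> 0 then 1 else 0)"
  unfolding stake_sum_def by (subst suminf_finite[of "{0}"]) (auto simp: unit_stake_def)

lemma win_prob_unit_stake: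
  assumes "t \<le> 0 \<or> (p = 1 \<and> t \<le> 1)"
  shows "win_prob p t unit_stake = 1"
proof -
  interpret prob_space "bern_space p" by (rule prob_space_bern_space)
  show ?thesis
  proof (cases "t \<le> 0")
    case True
    then have "{\<omega> \<in> space (bern_space p). t \<le> stake_sum unit_stake \<omega>} = space (bern_space p)"
      by (auto simp: stake_sum_unit_stake)
    then show ?thesis
      unfolding win_prob_def by (simp only: prob_space)
  next
    case False
    then have "p = 1" "t \<le> 1" using assms by auto
    have "{\<omega>. \<forall>j\<in>{0}. \<omega> j = True} \<subseteq> {\<omega>. t \<le> stake_sum unit_stake \<omega>}"
      using \<open>t \<le> 1\<close> by (auto simp: stake_sum_unit_stake)
    then have "prob {\<omega>. \<forall>j\<in>{0}. \<omega> j = True} \<le> win_prob p t unit_stake"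
      unfolding win_prob_def by (intro finite_measure_mono) (simp_all add: sets_bern_space_stake_sum)
    moreover have "prob {\<omega>. \<forall>j\<in>{0}. \<omega> j = True} = 1"
      using \<open>p = 1\<close> by (subst measure_bern_space_cylinder) auto
    ultimately show ?thesis
      using win_prob_le_1[of p t unit_stake] by linarith
  qed
qed

lemma win_prob_p_eq_0:
  assumes "0 < t"
  shows "win_prob 0 t c = 0"
proof -
  interpret prob_space "bern_space 0" by (rule prob_space_bern_space)
  define A where "A i = {\<omega>. \<forall>j\<in>{i}. \<omega> j = True}" for i :: nat
  have "A i \<in> sets (bern_space 0)" for i
    unfolding A_def by (rule sets_bern_space_cylinder) simp
  then have A_sets: "range A \<subseteq> sets (bern_space 0)" by auto
  have A_null: "prob (A i) = 0" for i
    unfolding A_def by (subst measure_bern_space_cylinder) auto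
  have "{\<omega> \<in> space (bern_space 0). t \<le> stake_sum c \<omega>} \<subseteq> (\<Union>i. A i)"
  proof
    fix \<omega> assume "\<omega> \<in> {\<omega> \<in> space (bern_space 0). t \<le> stake_sum c \<omega>}"
    moreover have "stake_sum c \<omega> = 0" if "\<forall>i. \<not> \<omega> i"
      using that by (simp add: stake_sum_def)
    ultimately show "\<omega> \<in> (\<Union>i. A i)"
      using assms by (force simp: A_def)
  qed
  then have "win_prob 0 t c \<le> prob (\<Union>i. A i)"
    unfolding win_prob_def using A_sets by (intro finite_measure_mono) auto
  also have "\<dots> \<le> (\<Sum>i. prob (A i))"
    using A_sets by (intro finite_measure_subadditive_countably) (simp_all add: A_null)
  also have "\<dots> = 0" by (simp add: A_null)
  finally show ?thesis
    using win_prob_nonneg[of 0 t c] by simp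
qed

lemma win_prob_le_finite_bound:
  assumes p: "0 \<le> p" "p \<le> 1" and t: "t \<le> 1" and c: "stake_seq c"
    and bound: "\<And>c'. finite_stake_seq c' \<Longrightarrow> win_prob p t c' \<le> B"
  shows "win_prob p t c \<le> B"
proof -
  have unit: "win_prob p t unit_stake \<le> B"
    by (rule bound[OF finite_stake_seq_unit_stake])
  consider "finite {i. c i \<noteq> 0}" | "t \<le> 0 \<or> p = 1" | "p = 0" "0 < t"
    | "infinite {i. c i \<noteq> 0}" "0 < p" "p < 1"
    using p by fastforce
  then show ?thesis
  proof cases
    case 1
    then show ?thesis using bound c by (simp add: finite_stake_seq_def)
  next
    case 2
    then have "win_prob p t unit_stake = 1"
      using t by (intro win_prob_unit_stake) auto
    then show ?thesis
      using unit win_prob_le_1[of p t c] by linarith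
  next
    case 3
    then have "win_prob p t c = 0"
      by (simp add: win_prob_p_eq_0)
    then show ?thesis
      using unit win_prob_nonneg[of p t unit_stake] by linarith
  next
    case 4
    interpret prob_space "bern_space p" by (rule prob_space_bern_space)
    have split: "{\<omega> \<in> space (bern_space p). t \<le> stake_sum c \<omega>}
        = {\<omega>. t < stake_sum c \<omega>} \<union> {\<omega>. stake_sum c \<omega> = t}"
      by auto
    have "win_prob p t c = prob {\<omega>. t < stake_sum c \<omega>} + prob {\<omega>. stake_sum c \<omega> = t}"
      unfolding win_prob_def split
      by (rule finite_measure_Union) (auto simp: sets_bern_space_stake_sum)
    also have "prob {\<omega>. stake_sum c \<omega> = t} = 0"
      using stake_seq_pos_of_infinite_support[OF c] 4
      by (intro measure_stake_sum_eq_zero[OF c]) auto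
    also have "prob {\<omega>. t < stake_sum c \<omega>} \<le> B"
      by (rule measure_stake_sum_gt_le[OF c bound])
    finally show ?thesis by simp
  qed
qed

theorem proposition6:
  fixes p t :: real
  assumes "0 \<le> p" and "p \<le> t" and "t \<le> 1"
  shows "pi_fun p t = Sup {win_prob p t c | c. finite_stake_seq c}"
proof -
  define F where "F = {win_prob p t c | c. finite_stake_seq c}"
  define A where "A = {win_prob p t c | c. stake_seq c}"
  have "F \<noteq> {}" using finite_stake_seq_unit_stake by (auto simp: F_def)
  have "F \<subseteq> A" by (auto simp: F_def A_def finite_stake_seq_def)
  have "bdd_above A" by (rule bdd_aboveI[of _ 1]) (auto simp: A_def win_prob_le_1)
  then have "bdd_above F" using \<open>F \<subseteq> A\<close> by (rule bdd_above_mono)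
  have bound: "win_prob p t c \<le> Sup F" if "finite_stake_seq c" for c
    by (rule cSup_upper[OF _ \<open>bdd_above F\<close>]) (auto simp: F_def that)
  have "win_prob p t c \<le> Sup F" if "stake_seq c" for c
    by (rule win_prob_le_finite_bound[OF assms(1) _ assms(3) that bound]) (use assms in linarith)
  then have "Sup A \<le> Sup F"
    using \<open>F \<noteq> {}\<close> \<open>F \<subseteq> A\<close> by (intro cSup_least) (auto simp: A_def)
  moreover have "Sup F \<le> Sup A"
    by (rule cSup_subset_mono[OF \<open>F \<noteq> {}\<close> \<open>bdd_above A\<close> \<open>F \<subseteq> A\<close>])
  ultimately show ?thesis
    by (simp add: pi_fun_def F_def A_def)
qed

end
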